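(* Let $m,p,n$ be positive integers with $p\mid m$, and let $g\in G(m,p,n)$ be $p$-connected and not a diagonal reflection. Then there exists a reflection $s\in G(m,p,n)$ with $s\le_\perp g$ if and only if $\operatorname{codim}(g)=2$ and the non-1 eigenvalues of $g$ are $\zeta_m^{c}$ and $\zeta_m^{-c}$ for some integer $c$.
   Context: $\zeta_m=e^{2\pi i/m}$. $G(m,1,n)$ is the group of $n\times n$ monomial matrices whose nonzero entries are $m$-th roots of unity, acting on $V=\mathbb{C}^n$; for $p\mid m$, $G(m,p,n)$ is the subgroup of elements whose nonzero entries multiply to an $(m/p)$-th root of unity. A reflection is an element of finite order fixing a hyperplane pointwise; a diagonal reflection is a diagonal matrix that is a reflection. $\operatorname{codim}(g)=n-\dim\{v\in V:gv=v\}$, and the codimension order is $a\le_\perp c$ iff $\operatorname{codim}(a)+\operatorname{codim}(a^{-1}c)=\operatorname{codim}(c)$. A diagonal matrix $g\ne 1$ whose non-1 eigenvalues (with multiplicity) are $\zeta_m^{c_1},\dots,\zeta_m^{c_k}$ is $p$-connected if $p\mid c_1+\dots+c_k$ but $p\nmid\sum_{i\in I}c_i$ for every nonempty proper subset $I\subsetneq\{1,\dots,k\}$. *)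

theory Defs
  imports "HOL-Analysis.Analysis" "HOL-Library.Multiset"
begin

definition zeta :: "nat \<Rightarrow> complex" where
  "zeta m = cis (2 * pi / real m)"

definition monomial_mat :: "complex^'n^'n \<Rightarrow> bool" where
  "monomial_mat A \<longleftrightarrow> (\<forall>i. \<exists>!j. A$i$j \<noteq> 0) \<and> (\<forall>j. \<exists>!i. A$i$j \<noteq> 0)"

text \<open>G(m,p,n) as a set of n x n complex matrices, n = CARD('n).\<close>
definition Gmpn :: "nat \<Rightarrow> nat \<Rightarrow> (complex^'n^'n) set" where
  "Gmpn m p = {A. monomial_mat A \<and> (\<forall>i j. A$i$j \<noteq> 0 \<longrightarrow> (A$i$j) ^ m = 1)
      \<and> (\<Prod>(i,j)\<in>{(i,j). A$i$j \<noteq> 0}. A$i$j) ^ (m div p) = 1}"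

definition fixed_space :: "complex^'n^'n \<Rightarrow> (complex^'n) set" where
  "fixed_space A = {v. A *v v = v}"

definition codim :: "complex^'n^'n \<Rightarrow> nat" where
  "codim A = CARD('n) - vec.dim (fixed_space A)"

definition finite_order :: "complex^'n^'n \<Rightarrow> bool" where
  "finite_order A \<longleftrightarrow> (\<exists>k>0. (((**) A) ^^ k) (mat 1) = mat 1)"

definition reflection :: "complex^'n^'n \<Rightarrow> bool" where
  "reflection A \<longleftrightarrow> finite_order A \<and> vec.dim (fixed_space A) + 1 = CARD('n)"

definition diagonal_mat :: "complex^'n^'n \<Rightarrow> bool" where
  "diagonal_mat A \<longleftrightarrow> (\<forall>i j. i \<noteq> j \<longrightarrow> A$i$j = 0)"

definition diag_reflection :: "complex^'n^'n \<Rightarrow> bool" where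
  "diag_reflection A \<longleftrightarrow> diagonal_mat A \<and> reflection A"

definition le_perp :: "complex^'n^'n \<Rightarrow> complex^'n^'n \<Rightarrow> bool" where
  "le_perp a c \<longleftrightarrow> codim a + codim (matrix_inv a ** c) = codim c"

text \<open>Multiset of the non-1 eigenvalues (with multiplicity) of a diagonal matrix:
  these are exactly its diagonal entries different from 1.\<close>
definition nontriv_eigs :: "complex^'n^'n \<Rightarrow> complex multiset" where
  "nontriv_eigs g = image_mset (\<lambda>i. g$i$i) (mset_set {i. g$i$i \<noteq> 1})"

definition p_connected :: "nat \<Rightarrow> nat \<Rightarrow> complex^'n^'n \<Rightarrow> bool" where
  "p_connected m p g \<longleftrightarrow> diagonal_mat g \<and> g \<noteq> mat 1 \<and>
     (\<exists>c :: 'n \<Rightarrow> int. (\<forall>i\<in>{i. g$i$i \<noteq> 1}. g$i$i = zeta m powi c i) \<and>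
        int p dvd (\<Sum>i\<in>{i. g$i$i \<noteq> 1}. c i) \<and>
        (\<forall>I. I \<noteq> {} \<and> I \<subset> {i. g$i$i \<noteq> 1} \<longrightarrow> \<not> int p dvd (\<Sum>i\<in>I. c i)))"

end

theory Submission
  imports Defs "HOL-Library.Real_Mod"
begin

text \<open>
  Let \<open>S\<close> be the set of coordinates moved by the diagonal matrix \<open>g\<close>, so \<open>codim g = |S|\<close>.
  If a reflection \<open>s\<close> satisfies \<open>s \<le>\<^sub>\<perp> g\<close>, the fixed space of \<open>s\<^sup>-\<^sup>1 g\<close> has dimension
  \<open>n - |S| + 1\<close>, so it meets the \<open>|S|\<close>-dimensional coordinate space on \<open>S\<close> in some \<open>v \<noteq> 0\<close>
  with \<open>g v = s v\<close>. A reflection in a monomial group is either diagonal with a single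
  entry \<open>\<noteq> 1\<close>, or exchanges two coordinates \<open>a, b\<close> with entries of product 1. In the
  first case \<open>v\<close> is concentrated at the moved coordinate \<open>a\<close>, where \<open>g\<close> and \<open>s\<close> agree;
  membership of \<open>s\<close> in \<open>G(m,p,n)\<close> then makes \<open>{a}\<close> a sub-sum divisible by \<open>p\<close>, so by
  \<open>p\<close>-connectedness \<open>S = {a}\<close> and \<open>g\<close> would be a diagonal reflection. In the second case
  \<open>v\<close> lives on \<open>{a, b}\<close> and forces \<open>g\<^sub>a g\<^sub>b = 1\<close>, so \<open>{a, b}\<close> is a sub-sum divisible by
  \<open>p\<close> and \<open>S = {a, b}\<close>. Conversely, if \<open>g = diag(\<zeta>\<^sup>c, \<zeta>\<^sup>-\<^sup>c)\<close> on \<open>{a, b}\<close>, the reflection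
  exchanging \<open>a\<close> and \<open>b\<close> with entries \<open>\<zeta>\<^sup>c, \<zeta>\<^sup>-\<^sup>c\<close> lies below \<open>g\<close>, because its product
  with \<open>g\<close> is the plain transposition of \<open>a\<close> and \<open>b\<close>.
\<close>

lemma matrix_inv_right:
  fixes A :: "'a::field^'n^'n"
  assumes "invertible A"
  shows "A ** matrix_inv A = mat 1"
proof -
  have "A ** matrix_inv A = mat 1 \<and> matrix_inv A ** A = mat 1"
    unfolding matrix_inv_def by (rule someI_ex) (use assms in \<open>simp add: invertible_def\<close>)
  then show ?thesis ..
qed

lemma matrix_inv_unique:
  fixes A B :: "'a::field^'n^'n"
  assumes "A ** B = mat 1"
  shows "matrix_inv A = B"
proof -
  have inv: "invertible A"
    using assms invertible_right_inverse by blast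
  have "B ** A = mat 1"
    using assms matrix_left_right_inverse by blast
  then have "matrix_inv A = (B ** A) ** matrix_inv A"
    by simp
  also have "\<dots> = B"
    by (simp add: matrix_mul_assoc[symmetric] matrix_inv_right[OF inv])
  finally show ?thesis .
qed

lemma finite_order_invertible:
  assumes "finite_order (A :: complex^'n^'n)"
  shows "invertible A"
proof -
  obtain k where "k > 0" and "((**) A ^^ k) (mat 1) = mat 1"
    using assms unfolding finite_order_def by blast
  then obtain j where "A ** ((**) A ^^ j) (mat 1) = mat 1"
    by (metis Suc_pred funpow.simps(2) o_apply)
  then show ?thesis
    using invertible_right_inverse by blast
qed

subsection \<open>Coordinate subspaces\<close>

lemma subspace_fixed_space: "vec.subspace (fixed_space (A :: complex^'n^'n))"
  unfolding vec.subspace_def fixed_space_def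
  by (auto simp: matrix_vector_right_distrib vec.scale)

lemma subspace_supported_in: "vec.subspace {x :: 'a::field^'n. \<forall>i. i \<notin> T \<longrightarrow> x$i = 0}"
  unfolding vec.subspace_def by auto

lemma exists_nonzero_supported_in:
  fixes V :: "('a::field^'n) set"
  assumes V: "vec.subspace V" and dim: "CARD('n) < vec.dim V + card T"
  shows "\<exists>v\<in>V. v \<noteq> 0 \<and> (\<forall>i. i \<notin> T \<longrightarrow> v$i = 0)"
proof (rule ccontr)
  let ?W = "{x :: 'a^'n. \<forall>i. i \<notin> T \<longrightarrow> x$i = 0}"
  assume "\<not> ?thesis"
  then have "V \<inter> ?W = {0}"
    using V vec.subspace_0 by auto
  then have "vec.dim (V \<inter> ?W) = 0"
    by simp
  moreover have "vec.dim {x + y |x y. x \<in> V \<and> y \<in> ?W} + vec.dim (V \<inter> ?W) = vec.dim V + vec.dim ?W"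
    by (rule vec.dim_sums_Int[OF V subspace_supported_in])
  moreover have "vec.dim {x + y |x y. x \<in> V \<and> y \<in> ?W} \<le> CARD('n)"
    by (rule dim_subset_UNIV_cart_gen)
  moreover have "vec.dim ?W = card T"
    by (rule dim_substandard_cart)
  ultimately show False
    using dim by linarith
qed

lemma dim_hyperplane_coordinates:
  fixes x :: "'a::field" and a b :: "'n::finite"
  assumes "a \<noteq> b"
  shows "vec.dim {v :: 'a^'n. v$a = x * v$b} + 1 = CARD('n)"
proof -
  let ?V = "{v :: 'a^'n. v$a = x * v$b}"
  let ?W = "{v :: 'a^'n. \<forall>i. i \<notin> {a} \<longrightarrow> v$i = 0}"
  have V: "vec.subspace ?V"
    unfolding vec.subspace_def by (auto simp: algebra_simps)
  have "?V \<inter> ?W = {0}"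
    using assms by (auto simp: vec_eq_iff)
  moreover have "{v + w |v w. v \<in> ?V \<and> w \<in> ?W} = UNIV"
  proof -
    have "u \<in> {v + w |v w. v \<in> ?V \<and> w \<in> ?W}" for u :: "'a^'n"
    proof -
      define t where "t = u$a - x * u$b"
      have "u = (u - axis a t) + axis a t" "u - axis a t \<in> ?V" "axis a t \<in> ?W"
        using assms by (auto simp: axis_def t_def)
      then show ?thesis by blast
    qed
    then show ?thesis by blast
  qed
  moreover have "vec.dim {v + w |v w. v \<in> ?V \<and> w \<in> ?W} + vec.dim (?V \<inter> ?W) = vec.dim ?V + vec.dim ?W"
    by (rule vec.dim_sums_Int[OF V subspace_supported_in])
  moreover have "vec.dim ?W = card {a}"
    by (rule dim_substandard_cart)
  ultimately show ?thesis
    using vec_dim_card[where 'a='a and 'n='n] by simp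
qed

lemma dim_fixed_space_add_codim:
  fixes A :: "complex^'n^'n"
  shows "vec.dim (fixed_space A) + codim A = CARD('n)"
  unfolding codim_def using dim_subset_UNIV_cart_gen[of "fixed_space A"] by simp

subsection \<open>Diagonal and monomial matrices\<close>

lemma diagonal_mat_mult_vec_nth:
  assumes "diagonal_mat (g :: complex^'n^'n)"
  shows "(g *v v)$r = g$r$r * v$r"
proof -
  have "(g *v v)$r = (\<Sum>k\<in>UNIV. g$r$k * v$k)"
    by (simp add: matrix_vector_mult_def)
  also have "\<dots> = (\<Sum>k\<in>UNIV. if k = r then g$r$r * v$r else 0)"
    by (rule sum.cong) (use assms in \<open>auto simp: diagonal_mat_def\<close>)
  finally show ?thesis by simp
qed

lemma matrix_mult_diagonal_nth:
  assumes "diagonal_mat (g :: complex^'n^'n)"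
  shows "(A ** g)$i$j = A$i$j * g$j$j"
proof -
  have "(A ** g)$i$j = (\<Sum>k\<in>UNIV. A$i$k * g$k$j)"
    by (simp add: matrix_matrix_mult_def)
  also have "\<dots> = (\<Sum>k\<in>UNIV. if k = j then A$i$j * g$j$j else 0)"
    by (rule sum.cong) (use assms in \<open>auto simp: diagonal_mat_def\<close>)
  finally show ?thesis by simp
qed

lemma monomial_mat_mult_vec_nth:
  assumes "monomial_mat (s :: complex^'n^'n)" and "s$r$j \<noteq> 0"
  shows "(s *v v)$r = s$r$j * v$j"
proof -
  have "(s *v v)$r = (\<Sum>k\<in>UNIV. s$r$k * v$k)"
    by (simp add: matrix_vector_mult_def)
  also have "\<dots> = (\<Sum>k\<in>UNIV. if k = j then s$r$j * v$j else 0)"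
    by (rule sum.cong) (use assms in \<open>auto simp: monomial_mat_def\<close>)
  finally show ?thesis by simp
qed

lemma monomial_mat_column_unique:
  assumes "monomial_mat (s :: complex^'n^'n)" and "s$i$j \<noteq> 0" and "s$i'$j \<noteq> 0"
  shows "i = i'"
  using assms unfolding monomial_mat_def by metis

lemma diagonal_mat_eq_mat_1:
  assumes "diagonal_mat (g :: complex^'n^'n)" and "\<And>i. g$i$i = 1"
  shows "g = mat 1"
  using assms by (auto simp: diagonal_mat_def vec_eq_iff mat_def)

lemma fixed_space_diagonal:
  assumes "diagonal_mat (g :: complex^'n^'n)"
  shows "fixed_space g = {v. \<forall>i. i \<notin> - {i. g$i$i \<noteq> 1} \<longrightarrow> v$i = 0}"
  unfolding fixed_space_def
  by (auto simp: vec_eq_iff diagonal_mat_mult_vec_nth[OF assms])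

lemma codim_diagonal:
  assumes "diagonal_mat (g :: complex^'n^'n)"
  shows "codim g = card {i. g$i$i \<noteq> 1}"
proof -
  have "vec.dim (fixed_space g) = CARD('n) - card {i. g$i$i \<noteq> 1}"
    unfolding fixed_space_diagonal[OF assms] dim_substandard_cart
    by (simp add: Compl_eq_Diff_UNIV card_Diff_subset)
  then show ?thesis
    unfolding codim_def using card_mono[of UNIV "{i. g$i$i \<noteq> 1}"] by simp
qed

lemma Gmpn_monomial_mat: "s \<in> Gmpn m p \<Longrightarrow> monomial_mat s"
  by (simp add: Gmpn_def)

lemma Gmpn_diagonal_nonzero:
  assumes "g \<in> Gmpn m p" and "diagonal_mat g"
  shows "g$i$i \<noteq> 0"
  using assms by (metis Gmpn_monomial_mat diagonal_mat_def monomial_mat_def)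

lemma Gmpn_entry_root: "g \<in> Gmpn m p \<Longrightarrow> g$i$j \<noteq> 0 \<Longrightarrow> (g$i$j) ^ m = 1"
  by (simp add: Gmpn_def)

lemma prod_nonzero_entries_pattern:
  fixes s :: "complex^'n^'n"
  assumes "\<And>i j. s$i$j \<noteq> 0 \<longleftrightarrow> j = \<tau> i"
  shows "(\<Prod>(i,j)\<in>{(i,j). s$i$j \<noteq> 0}. s$i$j) = (\<Prod>i\<in>UNIV. s$i$(\<tau> i))"
proof -
  have "{(i,j). s$i$j \<noteq> 0} = (\<lambda>i. (i, \<tau> i)) ` UNIV"
    using assms by auto
  then show ?thesis
    by (simp add: prod.reindex inj_on_def)
qed

lemma diag_reflection_if_single_moved:
  fixes g :: "complex^'n^'n"
  assumes "0 < m" and "g \<in> Gmpn m p" and "diagonal_mat g" and "card {i. g$i$i \<noteq> 1} = 1"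
  shows "diag_reflection g"
  unfolding diag_reflection_def reflection_def finite_order_def
proof (intro conjI exI[of _ m])
  have "((**) g ^^ k) (mat 1) = (\<chi> i j. if i = j then g$i$i ^ k else 0)" for k
  proof (induction k)
    case (Suc k)
    then show ?case
      using assms(3) by (simp add: matrix_mult_diagonal_nth vec_eq_iff diagonal_mat_def)
  qed (simp add: mat_def vec_eq_iff)
  then show "((**) g ^^ m) (mat 1) = mat 1"
    using Gmpn_entry_root[OF assms(2) Gmpn_diagonal_nonzero[OF assms(2,3)]]
    by (simp add: mat_def vec_eq_iff)
  show "vec.dim (fixed_space g) + 1 = CARD('n)"
    using dim_fixed_space_add_codim[of g] codim_diagonal[OF assms(3)] assms(4) by simp
qed (use assms in auto)

subsection \<open>Roots of unity and \<open>p\<close>-connectedness\<close>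

lemma zeta_nonzero: "zeta m \<noteq> 0"
  unfolding zeta_def by simp

lemma zeta_powi_eq_1_iff:
  assumes "0 < m"
  shows "zeta m powi c = 1 \<longleftrightarrow> int m dvd c"
proof -
  have "zeta m powi c = 1 \<longleftrightarrow> (\<exists>k::int. of_int c * (2 * pi / real m) = of_int k * (2 * pi))"
    unfolding zeta_def cis_power_int by (rule cis_eq_1_iff)
  also have "\<dots> \<longleftrightarrow> (\<exists>k::int. real_of_int c = of_int k * real m)"
    using assms by (simp add: field_simps)
  also have "\<dots> \<longleftrightarrow> (\<exists>k::int. c = k * int m)"
    by (metis of_int_eq_iff of_int_mult of_int_of_nat_eq)
  finally show ?thesis
    by (auto simp: dvd_def mult.commute)
qed

lemma power_int_sum:
  fixes x :: "'a::field"
  assumes "x \<noteq> 0"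
  shows "x powi (\<Sum>i\<in>A. f i) = (\<Prod>i\<in>A. x powi f i)"
proof (induction A rule: infinite_finite_induct)
  case (insert i A)
  then show ?case
    using assms by (simp add: power_int_add)
qed simp_all

lemma p_connected_moved_minimal:
  fixes g :: "complex^'n^'n"
  assumes "0 < m" and "0 < p" and "p dvd m" and "p_connected m p g"
    and "I \<noteq> {}" and "I \<subseteq> {i. g$i$i \<noteq> 1}" and "(\<Prod>i\<in>I. g$i$i) ^ (m div p) = 1"
  shows "I = {i. g$i$i \<noteq> 1}"
proof (rule ccontr)
  obtain c :: "'n \<Rightarrow> int" where c: "\<forall>i\<in>{i. g$i$i \<noteq> 1}. g$i$i = zeta m powi c i"
    and minimal: "\<forall>I. I \<noteq> {} \<and> I \<subset> {i. g$i$i \<noteq> 1} \<longrightarrow> \<not> int p dvd (\<Sum>i\<in>I. c i)"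
    using assms(4) unfolding p_connected_def by (elim conjE exE)
  assume "I \<noteq> {i. g$i$i \<noteq> 1}"
  with minimal assms(5,6) have "\<not> int p dvd (\<Sum>i\<in>I. c i)"
    by auto
  have "(\<Prod>i\<in>I. g$i$i) = (\<Prod>i\<in>I. zeta m powi c i)"
    using c assms(6) by (intro prod.cong) auto
  also have "\<dots> = zeta m powi (\<Sum>i\<in>I. c i)"
    by (simp add: power_int_sum zeta_nonzero)
  finally have "zeta m powi ((\<Sum>i\<in>I. c i) * int (m div p)) = 1"
    using assms(7) by (simp add: power_int_mult power_int_of_nat)
  then have "int m dvd (\<Sum>i\<in>I. c i) * int (m div p)"
    by (simp add: zeta_powi_eq_1_iff[OF assms(1)])
  moreover obtain q where "m = p * q" and "q \<noteq> 0"
    using assms(1,3) by auto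
  ultimately have "int p * int q dvd (\<Sum>i\<in>I. c i) * int q"
    using assms(2) by simp
  then have "int p dvd (\<Sum>i\<in>I. c i)"
    using \<open>q \<noteq> 0\<close> by simp
  with \<open>\<not> int p dvd (\<Sum>i\<in>I. c i)\<close> show False ..
qed

subsection \<open>Reflections in a monomial group\<close>

context
  fixes s :: "complex^'n^'n"
  assumes monomial: "monomial_mat s"
    and hyperplane: "vec.dim (fixed_space s) + 1 = CARD('n)"
begin

private lemma fixed_vector_on_pair:
  assumes "a \<noteq> b"
  obtains v where "s *v v = v" "v \<noteq> 0" "\<And>i. i \<noteq> a \<Longrightarrow> i \<noteq> b \<Longrightarrow> v$i = 0"
  using exists_nonzero_supported_in[OF subspace_fixed_space, of s "{a, b}"] assms hyperplane
  unfolding fixed_space_def by auto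

private lemma fixed_vector_entry_zero_iff:
  assumes "s *v v = v" and "s$i$j \<noteq> 0"
  shows "v$i = 0 \<longleftrightarrow> v$j = 0"
  using monomial_mat_mult_vec_nth[OF monomial assms(2), of v] assms by (simp add: vec_eq_iff)

private lemma nonzero_vector_with_two_zeros:
  assumes "v \<noteq> 0" and "\<And>i. i \<noteq> a \<Longrightarrow> i \<noteq> b \<Longrightarrow> v$i = 0"
  shows "v$a \<noteq> 0 \<or> v$b \<noteq> 0"
  using assms by (metis vec_eq_iff zero_index)

lemma monomial_reflection_diagonal_case:
  assumes "diagonal_mat s"
  obtains a where "s$a$a \<noteq> 1" "\<And>r. r \<noteq> a \<Longrightarrow> s$r$r = 1"
proof -
  obtain a where a: "s$a$a \<noteq> 1"
  proof (rule ccontr)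
    assume "\<not> thesis"
    then have "s = mat 1"
      using that diagonal_mat_eq_mat_1[OF assms] by blast
    then show False
      using hyperplane vec_dim_card[where 'a=complex and 'n='n] by (simp add: fixed_space_def)
  qed
  moreover have "s$r$r = 1" if ra: "r \<noteq> a" for r
  proof (rule ccontr)
    assume r: "s$r$r \<noteq> 1"
    obtain v where v: "s *v v = v" "v \<noteq> 0" "\<And>i. i \<noteq> a \<Longrightarrow> i \<noteq> r \<Longrightarrow> v$i = 0"
      using fixed_vector_on_pair[of a r] ra by metis
    have "v$i = 0" if "s$i$i \<noteq> 1" for i
      using v(1) that by (metis diagonal_mat_mult_vec_nth[OF assms] mult_cancel_right2 vec_eq_iff)
    then show False
      using nonzero_vector_with_two_zeros[OF v(2,3)] a r by blast
  qed
  ultimately show ?thesis using that by blast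
qed

lemma monomial_reflection_swap_case:
  assumes "a \<noteq> b" and ab: "s$a$b \<noteq> 0"
  shows "s$b$a \<noteq> 0" and "s$a$b * s$b$a = 1" and "\<And>d. d \<noteq> a \<Longrightarrow> d \<noteq> b \<Longrightarrow> s$d$d = 1"
proof -
  have ab_only: "s$i$b \<noteq> 0 \<Longrightarrow> i = a" for i
    using monomial_mat_column_unique[OF monomial ab] by blast
  \<comment> \<open>A fixed vector on \<open>{b, e}\<close> with \<open>e \<noteq> a\<close> vanishes at \<open>a\<close>, hence at \<open>b\<close>.\<close>
  have fixed_at_b: "v$b = 0 \<and> v$e \<noteq> 0"
    if "e \<noteq> a" "e \<noteq> b" "s *v v = v" "v \<noteq> 0" "\<And>i. i \<noteq> b \<Longrightarrow> i \<noteq> e \<Longrightarrow> v$i = 0" for e v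
    using fixed_vector_entry_zero_iff[OF that(3) ab] nonzero_vector_with_two_zeros[OF that(4,5)]
      that(5)[of a] that(1) \<open>a \<noteq> b\<close> by auto
  show ba: "s$b$a \<noteq> 0"
  proof (rule ccontr)
    assume "\<not> s$b$a \<noteq> 0"
    obtain e where e: "s$b$e \<noteq> 0"
      using monomial unfolding monomial_mat_def by blast
    with \<open>\<not> s$b$a \<noteq> 0\<close> have "e \<noteq> a" "e \<noteq> b"
      using ab_only \<open>a \<noteq> b\<close> by auto
    obtain v where v: "s *v v = v" "v \<noteq> 0" "\<And>i. i \<noteq> b \<Longrightarrow> i \<noteq> e \<Longrightarrow> v$i = 0"
      using fixed_vector_on_pair[of b e] \<open>e \<noteq> b\<close> by metis
    show False
      using fixed_at_b[OF \<open>e \<noteq> a\<close> \<open>e \<noteq> b\<close> v] fixed_vector_entry_zero_iff[OF v(1) e] by simp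
  qed
  show "s$a$b * s$b$a = 1"
  proof (rule ccontr)
    assume ne: "s$a$b * s$b$a \<noteq> 1"
    obtain v where v: "s *v v = v" "v \<noteq> 0" "\<And>i. i \<noteq> a \<Longrightarrow> i \<noteq> b \<Longrightarrow> v$i = 0"
      using fixed_vector_on_pair[OF \<open>a \<noteq> b\<close>] by metis
    have "v$a = s$a$b * v$b" "v$b = s$b$a * v$a"
      using v(1) monomial_mat_mult_vec_nth[OF monomial ab, of v]
        monomial_mat_mult_vec_nth[OF monomial ba, of v] by (simp_all add: vec_eq_iff)
    then have "(s$a$b * s$b$a) * v$a = v$a"
      by (metis mult.assoc)
    then show False
      using ne nonzero_vector_with_two_zeros[OF v(2,3)] fixed_vector_entry_zero_iff[OF v(1) ab]
      by (metis mult_cancel_right2)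
  qed
  show "s$d$d = 1" if "d \<noteq> a" "d \<noteq> b" for d
  proof (rule ccontr)
    assume nd: "s$d$d \<noteq> 1"
    obtain e where e: "s$d$e \<noteq> 0"
      using monomial unfolding monomial_mat_def by blast
    have "e \<noteq> b" "e \<noteq> a"
      using ab_only[of d] monomial_mat_column_unique[OF monomial ba, of d] e that by auto
    obtain v where v: "s *v v = v" "v \<noteq> 0" "\<And>i. i \<noteq> b \<Longrightarrow> i \<noteq> e \<Longrightarrow> v$i = 0"
      using fixed_vector_on_pair[of b e] \<open>e \<noteq> b\<close> by metis
    have ve: "v$e \<noteq> 0"
      using fixed_at_b[OF \<open>e \<noteq> a\<close> \<open>e \<noteq> b\<close> v] by simp
    have vd: "s$d$e * v$e = v$d"
      using v(1) monomial_mat_mult_vec_nth[OF monomial e, of v] by (simp add: vec_eq_iff)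
    show False
    proof (cases "e = d")
      case True
      with vd have "s$d$d * v$e = v$e"
        by simp
      with ve nd show False
        by simp
    next
      case False
      with v(3)[of d] that(2) have "v$d = 0"
        by blast
      with vd e ve show False
        by simp
    qed
  qed
qed

end

lemma le_perp_common_vector:
  fixes s g :: "complex^'n^'n"
  assumes "invertible s" and "le_perp s g" and "0 < codim s" and "diagonal_mat g"
  obtains v where "v \<noteq> 0" and "g *v v = s *v v" and "\<And>i. g$i$i = 1 \<Longrightarrow> v$i = 0"
proof -
  define h where "h = matrix_inv s ** g"
  have "CARD('n) < vec.dim (fixed_space h) + card {i. g$i$i \<noteq> 1}"
    using assms(2,3) dim_fixed_space_add_codim[of h] codim_diagonal[OF assms(4)]
    unfolding le_perp_def h_def by linarith
  then obtain v where v: "h *v v = v" "v \<noteq> 0" "\<And>i. g$i$i = 1 \<Longrightarrow> v$i = 0"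
    using exists_nonzero_supported_in[OF subspace_fixed_space[of h], of "{i. g$i$i \<noteq> 1}"]
    unfolding fixed_space_def by auto
  have "g *v v = s *v (h *v v)"
    unfolding h_def
    by (simp add: matrix_vector_mul_assoc matrix_mul_assoc matrix_inv_right[OF assms(1)])
  with v show ?thesis
    using that by simp
qed

subsection \<open>The reflection exchanging two coordinates\<close>

definition swap_mat :: "'n \<Rightarrow> 'n \<Rightarrow> complex \<Rightarrow> complex \<Rightarrow> complex^'n^'n" where
  "swap_mat a b x y = (\<chi> r j. if r = a then (if j = b then x else 0)
      else if r = b then (if j = a then y else 0) else if j = r then 1 else 0)"

context
  fixes a b :: "'n::finite" and x y :: complex
  assumes ab: "a \<noteq> b" and xy: "x * y = 1"
begin

lemma swap_mat_mult_vec: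
  "swap_mat a b x y *v v = (\<chi> r. if r = a then x * v$b else if r = b then y * v$a else v$r)"
  unfolding swap_mat_def matrix_vector_mult_def vec_eq_iff
  using ab by (auto simp: if_distrib[of "\<lambda>z. z * _"] cong: if_cong)

lemma swap_mat_mult_self: "swap_mat a b x y ** swap_mat a b x y = mat 1"
proof (rule matrix_eq[THEN iffD2], intro allI)
  fix v
  have "x * (y * v$a) = v$a" "y * (x * v$b) = v$b"
    using xy by (simp_all add: mult.assoc[symmetric] mult.commute[of y x])
  then show "(swap_mat a b x y ** swap_mat a b x y) *v v = mat 1 *v v"
    using ab by (simp add: matrix_vector_mul_assoc[symmetric] swap_mat_mult_vec vec_eq_iff)
qed

lemma fixed_space_swap_mat: "fixed_space (swap_mat a b x y) = {v. v$a = x * v$b}"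
proof -
  have "v$b = y * v$a" if "v$a = x * v$b" for v
    using that xy by (simp add: mult.assoc[symmetric] mult.commute[of y x])
  then show ?thesis
    unfolding fixed_space_def swap_mat_mult_vec using ab by (auto simp: vec_eq_iff)
qed

lemma codim_swap_mat: "codim (swap_mat a b x y) = 1"
  using dim_hyperplane_coordinates[OF ab, of x] unfolding codim_def fixed_space_swap_mat by simp

lemma reflection_swap_mat: "reflection (swap_mat a b x y)"
  unfolding reflection_def finite_order_def fixed_space_swap_mat
  using dim_hyperplane_coordinates[OF ab] swap_mat_mult_self
  by (intro conjI exI[of _ 2]) (simp_all add: numeral_2_eq_2)

lemma swap_mat_in_Gmpn:
  assumes "x ^ m = 1" and "y ^ m = 1"
  shows "swap_mat a b x y \<in> Gmpn m p"
proof -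
  define \<tau> where "\<tau> i = (if i = a then b else if i = b then a else i)" for i
  have x0: "x \<noteq> 0" and y0: "y \<noteq> 0"
    using xy by auto
  have pattern: "swap_mat a b x y $ i $ j \<noteq> 0 \<longleftrightarrow> j = \<tau> i" for i j
    unfolding swap_mat_def \<tau>_def using x0 y0 ab by auto
  have "(\<Prod>(i,j)\<in>{(i,j). swap_mat a b x y $ i $ j \<noteq> 0}. swap_mat a b x y $ i $ j)
      = (\<Prod>i\<in>UNIV. swap_mat a b x y $ i $ \<tau> i)"
    by (rule prod_nonzero_entries_pattern[OF pattern])
  also have "\<dots> = (\<Prod>i\<in>{a, b}. swap_mat a b x y $ i $ \<tau> i)"
    by (rule prod.mono_neutral_right) (auto simp: swap_mat_def \<tau>_def)
  also have "\<dots> = 1"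
    using ab xy by (simp add: swap_mat_def \<tau>_def)
  moreover have "monomial_mat (swap_mat a b x y)"
    unfolding monomial_mat_def pattern by (metis \<tau>_def)
  moreover have "\<forall>i j. swap_mat a b x y $ i $ j \<noteq> 0 \<longrightarrow> (swap_mat a b x y $ i $ j) ^ m = 1"
    using assms by (simp add: swap_mat_def)
  ultimately show ?thesis
    unfolding Gmpn_def by simp
qed

end

lemma swap_mat_mult_diagonal:
  assumes "diagonal_mat g" and "\<And>r. r \<noteq> a \<Longrightarrow> r \<noteq> b \<Longrightarrow> g$r$r = 1"
  shows "swap_mat a b x y ** g = swap_mat a b (x * g$b$b) (y * g$a$a)"
  using assms(2) by (auto simp: vec_eq_iff matrix_mult_diagonal_nth[OF assms(1)] swap_mat_def)

context
  fixes g s :: "complex^'n^'n" and v :: "complex^'n"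
  assumes g: "diagonal_mat g" and v0: "v \<noteq> 0" and gv: "g *v v = s *v v"
    and v_moved: "\<And>i. g$i$i = 1 \<Longrightarrow> v$i = 0"
begin

private lemma common_vector_nth: "(s *v v)$i = g$i$i * v$i"
  using gv by (metis diagonal_mat_mult_vec_nth[OF g])

private lemma common_vector_zero_if_fixed: "(s *v v)$i = v$i \<Longrightarrow> v$i = 0"
  using v_moved[of i] common_vector_nth[of i] by (metis mult_cancel_right2)

lemma common_vector_diagonal_case:
  assumes s: "diagonal_mat s" and s1: "\<And>r. r \<noteq> a \<Longrightarrow> s$r$r = 1"
  shows "g$a$a = s$a$a" and "g$a$a \<noteq> 1"
proof -
  have "v$r = 0" if "r \<noteq> a" for r
    using common_vector_zero_if_fixed s1[OF that] by (simp add: diagonal_mat_mult_vec_nth[OF s])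
  then have "v$a \<noteq> 0"
    using v0 by (metis vec_eq_iff zero_index)
  then show "g$a$a = s$a$a" and "g$a$a \<noteq> 1"
    using common_vector_nth[of a] v_moved[of a] by (auto simp: diagonal_mat_mult_vec_nth[OF s])
qed

lemma common_vector_swap_case:
  assumes s: "monomial_mat s" and "a \<noteq> b" and ab: "s$a$b \<noteq> 0" and ba: "s$b$a \<noteq> 0"
    and s_ab: "s$a$b * s$b$a = 1" and s1: "\<And>d. d \<noteq> a \<Longrightarrow> d \<noteq> b \<Longrightarrow> s$d$d = 1"
    and g0: "\<And>i. g$i$i \<noteq> 0"
  shows "g$a$a * g$b$b = 1" and "g$a$a \<noteq> 1" and "g$b$b \<noteq> 1"
proof -
  have "v$d = 0" if "d \<noteq> a" "d \<noteq> b" for d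
    using common_vector_zero_if_fixed monomial_mat_mult_vec_nth[OF s, of d d] s1[OF that] by simp
  then have "v$a \<noteq> 0 \<or> v$b \<noteq> 0"
    using v0 by (metis vec_eq_iff zero_index)
  moreover have ga: "g$a$a * v$a = s$a$b * v$b" and gb: "g$b$b * v$b = s$b$a * v$a"
    using common_vector_nth monomial_mat_mult_vec_nth[OF s ab] monomial_mat_mult_vec_nth[OF s ba]
    by metis+
  ultimately have va: "v$a \<noteq> 0" and vb: "v$b \<noteq> 0"
    using g0 ab ba by auto
  have "(g$a$a * g$b$b) * v$a = g$b$b * (s$a$b * v$b)"
    by (simp add: ga[symmetric])
  also have "\<dots> = (s$a$b * s$b$a) * v$a"
    by (simp add: gb[symmetric])
  finally show "g$a$a * g$b$b = 1"
    using va s_ab by simp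
  show "g$a$a \<noteq> 1" and "g$b$b \<noteq> 1"
    using v_moved va vb by auto
qed

end

lemma reflection_le_perp_imp_swap:
  fixes g s :: "complex^'n^'n"
  assumes "0 < m" and "0 < p" and "p dvd m" and "g \<in> Gmpn m p" and "p_connected m p g"
    and "\<not> diag_reflection g" and "s \<in> Gmpn m p" and "reflection s" and "le_perp s g"
  obtains a b where "a \<noteq> b" and "{i. g$i$i \<noteq> 1} = {a, b}" and "g$a$a * g$b$b = 1"
proof -
  have g: "diagonal_mat g"
    using assms(5) by (simp add: p_connected_def)
  have s: "monomial_mat s" "vec.dim (fixed_space s) + 1 = CARD('n)"
    using assms(7,8) by (simp_all add: Gmpn_monomial_mat reflection_def)
  have "invertible s" "0 < codim s"
    using assms(8) finite_order_invertible by (auto simp: reflection_def codim_def)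
  then obtain v where v: "v \<noteq> 0" "g *v v = s *v v" "\<And>i. g$i$i = 1 \<Longrightarrow> v$i = 0"
    using le_perp_common_vector[OF _ assms(9) _ g] by metis
  note moved_minimal = p_connected_moved_minimal[OF assms(1-3,5)]
  show thesis
  proof (cases "diagonal_mat s")
    case True
    then obtain a where a: "\<And>r. r \<noteq> a \<Longrightarrow> s$r$r = 1"
      using monomial_reflection_diagonal_case[OF s] by metis
    note ga = common_vector_diagonal_case[OF g v True a]
    have "s$i$j \<noteq> 0 \<longleftrightarrow> j = i" for i j
      using True Gmpn_diagonal_nonzero[OF assms(7) True] unfolding diagonal_mat_def by metis
    then have "(\<Prod>(i,j)\<in>{(i,j). s$i$j \<noteq> 0}. s$i$j) = (\<Prod>i\<in>UNIV. s$i$i)"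
      by (rule prod_nonzero_entries_pattern)
    also have "\<dots> = s$a$a * (\<Prod>i\<in>UNIV - {a}. s$i$i)"
      by (simp add: prod.remove)
    also have "\<dots> = s$a$a"
      using a by (simp add: prod.neutral)
    finally have "{a} = {i. g$i$i \<noteq> 1}"
      using ga assms(7) by (intro moved_minimal) (auto simp: Gmpn_def)
    then have "card {i. g$i$i \<noteq> 1} = 1"
      by (metis One_nat_def card_1_singleton_iff)
    then show thesis
      using assms(6) diag_reflection_if_single_moved[OF assms(1,4) g] by blast
  next
    case False
    then obtain a b where ab: "a \<noteq> b" "s$a$b \<noteq> 0"
      unfolding diagonal_mat_def by blast
    note gab = common_vector_swap_case[OF g v s(1) ab monomial_reflection_swap_case[OF s ab]
        Gmpn_diagonal_nonzero[OF assms(4) g]]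
    have "{a, b} = {i. g$i$i \<noteq> 1}"
      using gab ab(1) by (intro moved_minimal) auto
    then show thesis
      using that[OF ab(1) _ gab(1)] by simp
  qed
qed

lemma swap_le_perp:
  assumes "g \<in> Gmpn m p" and "diagonal_mat g" and "a \<noteq> b"
    and "{i. g$i$i \<noteq> 1} = {a, b}" and "g$a$a * g$b$b = 1"
  shows "\<exists>s\<in>Gmpn m p. reflection s \<and> le_perp s g"
proof (intro bexI conjI)
  let ?s = "swap_mat a b (g$a$a) (g$b$b)"
  have "?s ** g = swap_mat a b (g$a$a * g$b$b) (g$b$b * g$a$a)"
    using swap_mat_mult_diagonal[OF assms(2)] assms(4) by blast
  then have "?s ** g = swap_mat a b 1 1"
    using assms(5) by (simp add: mult.commute)
  moreover have "matrix_inv ?s = ?s"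
    by (rule matrix_inv_unique[OF swap_mat_mult_self[OF assms(3,5)]])
  ultimately show "le_perp ?s g"
    unfolding le_perp_def
    using codim_swap_mat[OF assms(3,5)] codim_swap_mat[OF assms(3), of 1 1] codim_diagonal[OF assms(2)] assms(4,3)
    by simp
  show "reflection ?s"
    using assms(3,5) by (rule reflection_swap_mat)
  show "?s \<in> Gmpn m p"
    using assms Gmpn_entry_root[OF assms(1) Gmpn_diagonal_nonzero[OF assms(1,2)]]
    by (intro swap_mat_in_Gmpn)
qed

lemma nontriv_eigs_pair:
  assumes "a \<noteq> b" and "{i. g$i$i \<noteq> 1} = {a, b}"
  shows "nontriv_eigs g = {# g$a$a, g$b$b #}"
  using assms by (simp add: nontriv_eigs_def)

lemma codim_2_inverse_eigs_iff_moved_pair: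
  assumes "p_connected m p g"
  shows "(codim g = 2 \<and> (\<exists>c. nontriv_eigs g = {# zeta m powi c, zeta m powi (-c) #})) \<longleftrightarrow>
    (\<exists>a b. a \<noteq> b \<and> {i. g$i$i \<noteq> 1} = {a, b} \<and> g$a$a * g$b$b = 1)"
proof -
  have g: "diagonal_mat g"
    using assms by (simp add: p_connected_def)
  show ?thesis
  proof
    assume "codim g = 2 \<and> (\<exists>c. nontriv_eigs g = {# zeta m powi c, zeta m powi (-c) #})"
    then obtain c where "card {i. g$i$i \<noteq> 1} = 2"
      and eigs: "nontriv_eigs g = {# zeta m powi c, zeta m powi (-c) #}"
      using codim_diagonal[OF g] by auto
    then obtain a b where ab: "a \<noteq> b" "{i. g$i$i \<noteq> 1} = {a, b}"
      by (auto simp: card_2_iff)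
    have "g$a$a * g$b$b = zeta m powi c * zeta m powi (-c)"
      using arg_cong[OF eigs, of prod_mset] nontriv_eigs_pair[OF ab] by simp
    then show "\<exists>a b. a \<noteq> b \<and> {i. g$i$i \<noteq> 1} = {a, b} \<and> g$a$a * g$b$b = 1"
      using ab by (auto simp: power_int_minus zeta_nonzero)
  next
    assume "\<exists>a b. a \<noteq> b \<and> {i. g$i$i \<noteq> 1} = {a, b} \<and> g$a$a * g$b$b = 1"
    then obtain a b where ab: "a \<noteq> b" "{i. g$i$i \<noteq> 1} = {a, b}" "g$a$a * g$b$b = 1"
      by blast
    obtain c where ga: "g$a$a = zeta m powi c"
      using assms ab(2) unfolding p_connected_def by blast
    have "g$b$b = inverse (g$a$a)"
      using inverse_unique[OF ab(3)] by simp
    then have "nontriv_eigs g = {# zeta m powi c, zeta m powi (-c) #}"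
      using nontriv_eigs_pair[OF ab(1,2)] ga by (simp add: power_int_minus)
    moreover have "codim g = 2"
      using codim_diagonal[OF g] ab(1,2) by simp
    ultimately show "codim g = 2 \<and> (\<exists>c. nontriv_eigs g = {# zeta m powi c, zeta m powi (-c) #})"
      by blast
  qed
qed

theorem mainTheorem6:
  fixes m p :: nat and g :: "complex^'n^'n"
  assumes "0 < m" and "0 < p" and "p dvd m"
    and "g \<in> Gmpn m p"
    and "p_connected m p g"
    and "\<not> diag_reflection g"
  shows "(\<exists>s\<in>Gmpn m p. reflection s \<and> le_perp s g) \<longleftrightarrow>
         (codim g = 2 \<and> (\<exists>c::int. nontriv_eigs g = {# zeta m powi c, zeta m powi (-c) #}))"
  unfolding codim_2_inverse_eigs_iff_moved_pair[OF assms(5)]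
proof
  assume "\<exists>s\<in>Gmpn m p. reflection s \<and> le_perp s g"
  then obtain s where s: "s \<in> Gmpn m p" "reflection s" "le_perp s g"
    by blast
  obtain a b where "a \<noteq> b" "{i. g$i$i \<noteq> 1} = {a, b}" "g$a$a * g$b$b = 1"
    by (rule reflection_le_perp_imp_swap[OF assms s])
  then show "\<exists>a b. a \<noteq> b \<and> {i. g$i$i \<noteq> 1} = {a, b} \<and> g$a$a * g$b$b = 1"
    by blast
next
  have "diagonal_mat g"
    using assms(5) by (simp add: p_connected_def)
  then show "\<exists>a b. a \<noteq> b \<and> {i. g$i$i \<noteq> 1} = {a, b} \<and> g$a$a * g$b$b = 1 \<Longrightarrow>
      \<exists>s\<in>Gmpn m p. reflection s \<and> le_perp s g"
    using swap_le_perp[OF assms(4)] by blast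
qed

end
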